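(* In the procedure of obtaining a 2-swap optimal solution for $P2\|C_{\max}$ with $n$ jobs (i.e., repeatedly replacing the current schedule by an improving 2-swap neighbor), a critical machine remains critical for at most $O(n^2)$ iterations.
   Context: Problem $P2\|C_{\max}$: $n$ jobs with processing times $p_j>0$, two identical machines. A schedule $\sigma=(M_1,M_2)$ partitions the jobs into sets processed on machines 1 and 2; loads $L_i=\sum_{j\in M_i}p_j$, makespan $\max_iL_i$; a machine whose load equals the makespan is critical. A 2-swap neighbor is obtained by choosing $k'$ jobs on one machine and $k''$ on the other with $k'+k''\le2$ and interchanging their machine assignments; it is improving if its makespan is strictly smaller. A 2-swap optimal solution has no improving 2-swap neighbor. *)

theory Defs
  imports Complex_Main
begin

(* A schedule s :: nat => bool assigns job j to machine 1 (s j = True) or machine 2 (s j = False). *)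

definition machine_jobs :: "nat \<Rightarrow> (nat \<Rightarrow> bool) \<Rightarrow> bool \<Rightarrow> nat set" where
  "machine_jobs n s i = {j. j < n \<and> s j = i}"

definition load :: "nat \<Rightarrow> (nat \<Rightarrow> real) \<Rightarrow> (nat \<Rightarrow> bool) \<Rightarrow> bool \<Rightarrow> real" where
  "load n p s i = (\<Sum>j\<in>machine_jobs n s i. p j)"

definition makespan :: "nat \<Rightarrow> (nat \<Rightarrow> real) \<Rightarrow> (nat \<Rightarrow> bool) \<Rightarrow> real" where
  "makespan n p s = max (load n p s True) (load n p s False)"

definition critical :: "nat \<Rightarrow> (nat \<Rightarrow> real) \<Rightarrow> (nat \<Rightarrow> bool) \<Rightarrow> bool \<Rightarrow> bool" where
  "critical n p s i \<longleftrightarrow> load n p s i = makespan n p s"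

definition two_swap_neighbor :: "nat \<Rightarrow> (nat \<Rightarrow> bool) \<Rightarrow> (nat \<Rightarrow> bool) \<Rightarrow> bool" where
  "two_swap_neighbor n s s' \<longleftrightarrow>
     (\<exists>A B. A \<subseteq> machine_jobs n s True \<and> B \<subseteq> machine_jobs n s False \<and>
            card A + card B \<le> 2 \<and>
            (\<forall>j. s' j = (if j \<in> A \<union> B then \<not> s j else s j)))"

definition improving_two_swap :: "nat \<Rightarrow> (nat \<Rightarrow> real) \<Rightarrow> (nat \<Rightarrow> bool) \<Rightarrow> (nat \<Rightarrow> bool) \<Rightarrow> bool" where
  "improving_two_swap n p s s' \<longleftrightarrow>
     two_swap_neighbor n s s' \<and> makespan n p s' < makespan n p s"

end

theory Submission
  imports Defs
begin

text \<open>Let the rank of a job be one more than the number of jobs that are strictly shorter, and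
  let the potential of a machine be the total rank of its jobs; it is at most \<open>n\<^sup>2\<close>. An improving
  2-swap must strictly lower the load of a critical machine, so the jobs it sends away are
  strictly longer in total than the jobs it receives. Since at most two jobs move, either the
  machine only loses jobs, or it exchanges one job for a strictly shorter one; in both cases
  its potential drops by at least one.\<close>

definition job_rank :: "nat \<Rightarrow> (nat \<Rightarrow> real) \<Rightarrow> nat \<Rightarrow> nat" where
  "job_rank n p j = card {j'. j' < n \<and> p j' < p j} + 1"

definition rank_potential :: "nat \<Rightarrow> (nat \<Rightarrow> real) \<Rightarrow> (nat \<Rightarrow> bool) \<Rightarrow> bool \<Rightarrow> nat" where
  "rank_potential n p s i = (\<Sum>j\<in>machine_jobs n s i. job_rank n p j)"

lemma machine_jobs_subset_lessThan: "machine_jobs n s i \<subseteq> {..<n}"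
  unfolding machine_jobs_def by auto

lemma finite_machine_jobs [simp]: "finite (machine_jobs n s i)"
  by (rule finite_subset[OF machine_jobs_subset_lessThan]) simp

lemma job_rank_strict_mono:
  assumes "b < n" "p b < p a"
  shows "job_rank n p b < job_rank n p a"
proof -
  have "{j'. j' < n \<and> p j' < p b} \<subset> {j'. j' < n \<and> p j' < p a}"
    using assms by auto
  then have "card {j'. j' < n \<and> p j' < p b} < card {j'. j' < n \<and> p j' < p a}"
    by (rule psubset_card_mono[rotated]) simp
  then show ?thesis
    unfolding job_rank_def by simp
qed

lemma job_rank_le:
  assumes "j < n"
  shows "job_rank n p j \<le> n"
proof -
  have "card {j'. j' < n \<and> p j' < p j} \<le> card ({..<n} - {j})"
    by (rule card_mono) auto
  then show ?thesis
    using assms unfolding job_rank_def by simp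
qed

lemma rank_potential_le: "rank_potential n p s i \<le> n\<^sup>2"
proof -
  have "rank_potential n p s i \<le> (\<Sum>j<n. job_rank n p j)"
    unfolding rank_potential_def by (rule sum_mono2) (auto simp: machine_jobs_subset_lessThan)
  also have "\<dots> \<le> (\<Sum>j<n. n)"
    by (rule sum_mono) (simp add: job_rank_le)
  finally show ?thesis
    by (simp add: power2_eq_square)
qed

lemma sum_diff_Un_add_eq:
  fixes f :: "'a \<Rightarrow> 'b::comm_monoid_add"
  assumes "finite M" "finite Y" "X \<subseteq> M" "Y \<inter> M = {}"
  shows "sum f ((M - X) \<union> Y) + sum f X = sum f M + sum f Y"
proof -
  have "sum f ((M - X) \<union> Y) = sum f (M - X) + sum f Y"
    using assms by (intro sum.union_disjoint) auto
  moreover have "sum f M = sum f (M - X) + sum f X"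
    using sum.subset_diff[OF assms(3,1)] by simp
  ultimately show ?thesis
    by (simp add: algebra_simps)
qed

lemma two_swap_neighborE:
  assumes "two_swap_neighbor n s s'"
  obtains X Y where "X \<subseteq> machine_jobs n s i" "Y \<subseteq> machine_jobs n s (\<not> i)"
    "card X + card Y \<le> 2" "machine_jobs n s' i = (machine_jobs n s i - X) \<union> Y"
proof -
  obtain A B where A: "A \<subseteq> machine_jobs n s True" and B: "B \<subseteq> machine_jobs n s False"
    and card: "card A + card B \<le> 2"
    and s': "\<forall>j. s' j = (if j \<in> A \<union> B then \<not> s j else s j)"
    using assms unfolding two_swap_neighbor_def by blast
  have jobs': "machine_jobs n s' i = (machine_jobs n s i - (if i then A else B)) \<union> (if i then B else A)"
    using A B s' unfolding machine_jobs_def by (cases i) auto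
  show thesis
    using that[OF _ _ _ jobs'] A B card by (cases i) auto
qed

text \<open>The hypothesis \<open>card X + card Y \<le> 2\<close> is essential: two short jobs may be shorter in total
  than one long job and still have the larger total rank.\<close>

lemma sum_job_rank_less:
  assumes "finite X" "finite Y" "card X + card Y \<le> 2" "Y \<subseteq> {..<n}"
    and "\<forall>j\<in>Y. 0 \<le> p j" "sum p Y < sum p X"
  shows "sum (job_rank n p) Y < sum (job_rank n p) X"
proof -
  have "X \<noteq> {}"
    using assms(5,6) sum_nonneg[of Y p] by auto
  then have "card X \<ge> 1"
    using \<open>finite X\<close> by (simp add: Suc_le_eq card_gt_0_iff)
  show ?thesis
  proof (cases "Y = {}")
    case True
    then show ?thesis
      using \<open>finite X\<close> \<open>X \<noteq> {}\<close> by (simp add: job_rank_def sum_pos)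
  next
    case False
    then have "card Y \<ge> 1"
      using \<open>finite Y\<close> by (simp add: Suc_le_eq card_gt_0_iff)
    then have "card X = 1" "card Y = 1"
      using \<open>card X \<ge> 1\<close> assms(3) by auto
    then obtain a b where "X = {a}" "Y = {b}"
      by (metis card_1_singletonE)
    then show ?thesis
      using assms(4,6) by (simp add: job_rank_strict_mono)
  qed
qed

lemma rank_potential_decreasing:
  assumes pos: "\<forall>j<n. 0 < p j"
    and improving: "improving_two_swap n p s s'" and crit: "critical n p s i"
  shows "rank_potential n p s' i < rank_potential n p s i"
proof -
  from improving have "two_swap_neighbor n s s'"
    unfolding improving_two_swap_def by simp
  then obtain X Y where X: "X \<subseteq> machine_jobs n s i" and Y: "Y \<subseteq> machine_jobs n s (\<not> i)"
    and card: "card X + card Y \<le> 2" and jobs': "machine_jobs n s' i = (machine_jobs n s i - X) \<union> Y"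
    by (rule two_swap_neighborE)
  have disjoint: "Y \<inter> machine_jobs n s i = {}"
    using Y unfolding machine_jobs_def by auto
  have finX: "finite X" and finY: "finite Y"
    using X Y by (auto intro: finite_subset)
  have Y_lt: "Y \<subseteq> {..<n}"
    using Y machine_jobs_subset_lessThan by blast
  have exchange: "sum f (machine_jobs n s' i) + sum f X = sum f (machine_jobs n s i) + sum f Y"
    for f :: "nat \<Rightarrow> 'b::comm_monoid_add"
    unfolding jobs' using finY X disjoint by (intro sum_diff_Un_add_eq) auto
  have "load n p s' i \<le> makespan n p s'"
    unfolding makespan_def by (cases i) auto
  also have "\<dots> < load n p s i"
    using improving crit unfolding improving_two_swap_def critical_def by simp
  finally have "sum p Y < sum p X"
    using exchange[of p] unfolding load_def by simp
  moreover have "\<forall>j\<in>Y. 0 \<le> p j"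
    using pos Y_lt by (auto intro: less_imp_le)
  ultimately have "sum (job_rank n p) Y < sum (job_rank n p) X"
    using finX finY card Y_lt by (intro sum_job_rank_less)
  then show ?thesis
    using exchange[of "job_rank n p"] unfolding rank_potential_def by simp
qed

lemma strictly_decreasing_run_le:
  fixes f :: "nat \<Rightarrow> nat"
  assumes "\<forall>t. t0 \<le> t \<and> t < t0 + L \<longrightarrow> f (Suc t) < f t"
  shows "L \<le> f t0"
  using assms
proof (induction L arbitrary: t0)
  case 0
  then show ?case by simp
next
  case (Suc L)
  then have "L \<le> f (Suc t0)" and "f (Suc t0) < f t0"
    by auto
  then show ?case by simp
qed

theorem lemma5:
  "\<exists>C::nat. \<forall>(n::nat) (p::nat \<Rightarrow> real) (\<sigma>::nat \<Rightarrow> (nat \<Rightarrow> bool)) (k::nat).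
     (\<forall>j<n. p j > 0) \<longrightarrow>
     (\<forall>t<k. improving_two_swap n p (\<sigma> t) (\<sigma> (Suc t))) \<longrightarrow>
     (\<forall>(i::bool) (t0::nat) (L::nat).
        t0 + L \<le> k \<and> (\<forall>t. t0 \<le> t \<and> t < t0 + L \<longrightarrow> critical n p (\<sigma> t) i)
        \<longrightarrow> L \<le> C * n^2)"
proof (rule exI[of _ 1], intro allI impI, elim conjE)
  fix n p \<sigma> k i t0 L
  assume pos: "\<forall>j<n. 0 < p j"
    and improving: "\<forall>t<k. improving_two_swap n p (\<sigma> t) (\<sigma> (Suc t))"
    and "t0 + L \<le> k" and crit: "\<forall>t. t0 \<le> t \<and> t < t0 + L \<longrightarrow> critical n p (\<sigma> t) i"
  have "\<forall>t. t0 \<le> t \<and> t < t0 + L \<longrightarrow>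
      rank_potential n p (\<sigma> (Suc t)) i < rank_potential n p (\<sigma> t) i"
  proof (intro allI impI)
    fix t
    assume "t0 \<le> t \<and> t < t0 + L"
    with improving crit \<open>t0 + L \<le> k\<close> show
      "rank_potential n p (\<sigma> (Suc t)) i < rank_potential n p (\<sigma> t) i"
      by (intro rank_potential_decreasing[OF pos]) simp_all
  qed
  then have "L \<le> rank_potential n p (\<sigma> t0) i"
    by (rule strictly_decreasing_run_le)
  also have "\<dots> \<le> n\<^sup>2"
    by (rule rank_potential_le)
  finally show "L \<le> 1 * n^2" by simp
qed

end
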